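(* Let $(\Pi^0(t))_{t\ge0}$ be a $(\Lambda_0,\Lambda_1)$-coalescent started from singletons, where $(\Lambda_0+\Lambda_1)(\{1\})=0$. Let $\zeta=\inf\{t\ge0:\Pi^0(t)=\{\mathbb{Z}_+,\emptyset,\dots\}\}$ be the fixation time, and define for $n\ge1$ $$\phi(n)=\sum_{k=2}^{n}(k-1)\binom{n}{k}\lambda_{n,k}+\Lambda_0([0,1])\,n,\qquad \lambda_{n,k}=\int_0^1x^{k-2}(1-x)^{n-k}\Lambda_1(dx).$$ Then $\mathbb{E}[\zeta]\le\sum_{n=1}^\infty\frac1{\phi(n)}$. In particular, if this series converges, $\zeta<\infty$ almost surely.
   Context: $\Lambda_0,\Lambda_1$ are finite measures on $[0,1]$. The $(\Lambda_0,\Lambda_1)$-coalescent is a process of partitions of $\mathbb{Z}_+=\{0,1,\dots\}$ (the block containing $0$ is distinguished) whose restriction to each $\{0,\dots,n\}$ is a continuous-time Markov chain in which, when there are $b$ blocks not containing $0$, each $k$-tuple ($2\le k\le b$) of such blocks merges into one block at rate $\lambda_{b,k}=\int_0^1x^{k-2}(1-x)^{b-k}\Lambda_1(dx)$, and each $k$-tuple ($1\le k\le b$) of such blocks merges with the block containing $0$ at rate $\int_0^1x^{k-1}(1-x)^{b-k}\Lambda_0(dx)$; no other transitions occur (convention $0^0=1$). *)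

theory Defs
  imports "HOL-Probability.Probability"
begin

definition is_partition :: "'a set \<Rightarrow> 'a set set \<Rightarrow> bool" where
  "is_partition A P \<longleftrightarrow> {} \<notin> P \<and> \<Union>P = A \<and> (\<forall>B\<in>P. \<forall>C\<in>P. B \<noteq> C \<longrightarrow> B \<inter> C = {})"

definition partitions_upto :: "nat \<Rightarrow> nat set set set" where
  "partitions_upto n = {P. is_partition {..n} P}"

definition restr :: "nat \<Rightarrow> nat set set \<Rightarrow> nat set set" where
  "restr n P = (\<lambda>B. B \<inter> {..n}) ` P - {{}}"

definition singletons_upto :: "nat \<Rightarrow> nat set set" where
  "singletons_upto n = (\<lambda>i. {i}) ` {..n}"

definition nzb :: "nat set set \<Rightarrow> nat set set" where
  "nzb P = {B\<in>P. 0 \<notin> B}"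

definition merge :: "nat set set \<Rightarrow> nat set set \<Rightarrow> nat set set" where
  "merge P K = (P - K) \<union> {\<Union>K}"

definition merge0 :: "nat set set \<Rightarrow> nat set set \<Rightarrow> nat set set" where
  "merge0 P K = {B\<in>P. B \<notin> K \<and> 0 \<notin> B} \<union> {\<Union>{B\<in>P. 0 \<in> B} \<union> \<Union>K}"

text \<open>lambda_{b,k} = int x^(k-2) (1-x)^(b-k) Lambda_1(dx)  (note 0^0 = 1).\<close>
definition lam :: "real measure \<Rightarrow> nat \<Rightarrow> nat \<Rightarrow> real" where
  "lam \<Lambda>1 b k = (\<integral>x. x ^ (k - 2) * (1 - x) ^ (b - k) \<partial>\<Lambda>1)"

text \<open>Rate at which a given k-tuple of blocks merges with the block of 0.\<close>
definition mu :: "real measure \<Rightarrow> nat \<Rightarrow> nat \<Rightarrow> real" where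
  "mu \<Lambda>0 b k = (\<integral>x. x ^ (k - 1) * (1 - x) ^ (b - k) \<partial>\<Lambda>0)"

definition rate :: "real measure \<Rightarrow> real measure \<Rightarrow> nat set set \<Rightarrow> nat set set \<Rightarrow> real" where
  "rate \<Lambda>0 \<Lambda>1 P P' =
     (\<Sum>K\<in>{K. K \<subseteq> nzb P \<and> 2 \<le> card K \<and> merge P K = P'}. lam \<Lambda>1 (card (nzb P)) (card K))
   + (\<Sum>K\<in>{K. K \<subseteq> nzb P \<and> 1 \<le> card K \<and> merge0 P K = P'}. mu \<Lambda>0 (card (nzb P)) (card K))"

definition gen :: "real measure \<Rightarrow> real measure \<Rightarrow> nat \<Rightarrow> nat set set \<Rightarrow> nat set set \<Rightarrow> real" where
  "gen \<Lambda>0 \<Lambda>1 n P P' =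
     (if P = P' then - (\<Sum>P''\<in>partitions_upto n - {P}. rate \<Lambda>0 \<Lambda>1 P P'') else rate \<Lambda>0 \<Lambda>1 P P')"

fun gpow :: "real measure \<Rightarrow> real measure \<Rightarrow> nat \<Rightarrow> nat \<Rightarrow> nat set set \<Rightarrow> nat set set \<Rightarrow> real" where
  "gpow \<Lambda>0 \<Lambda>1 n 0 P P' = (if P = P' then 1 else 0)"
| "gpow \<Lambda>0 \<Lambda>1 n (Suc k) P P' = (\<Sum>C\<in>partitions_upto n. gen \<Lambda>0 \<Lambda>1 n P C * gpow \<Lambda>0 \<Lambda>1 n k C P')"

definition trans_prob :: "real measure \<Rightarrow> real measure \<Rightarrow> nat \<Rightarrow> real \<Rightarrow> nat set set \<Rightarrow> nat set set \<Rightarrow> real" where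
  "trans_prob \<Lambda>0 \<Lambda>1 n t P P' = (\<Sum>k. t ^ k / fact k * gpow \<Lambda>0 \<Lambda>1 n k P P')"

text \<open>Finite-dimensional distribution of the chain started at s0 at time t0,
  visiting the states ss at the (increasing) times ts.\<close>
fun chain_prob :: "real measure \<Rightarrow> real measure \<Rightarrow> nat \<Rightarrow> real \<Rightarrow> nat set set \<Rightarrow> real list \<Rightarrow> nat set set list \<Rightarrow> real" where
  "chain_prob \<Lambda>0 \<Lambda>1 n t0 s0 (t # ts) (s # ss) =
     trans_prob \<Lambda>0 \<Lambda>1 n (t - t0) s0 s * chain_prob \<Lambda>0 \<Lambda>1 n t s ts ss"
| "chain_prob \<Lambda>0 \<Lambda>1 n t0 s0 _ _ = 1"

text \<open>Pi is a (Lambda_0,Lambda_1)-coalescent started from singletons on the probability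
  space M: it takes values in partitions of Z_+, every restriction to {0..n} is
  measurable, has cadlag (piecewise constant) paths, and has the finite-dimensional
  distributions of the continuous-time Markov chain with the above rates started
  from the singleton partition.\<close>
definition is_coalescent :: "real measure \<Rightarrow> real measure \<Rightarrow> 'w measure \<Rightarrow> (real \<Rightarrow> 'w \<Rightarrow> nat set set) \<Rightarrow> bool" where
  "is_coalescent \<Lambda>0 \<Lambda>1 M X \<longleftrightarrow>
     (\<forall>t\<ge>0. \<forall>\<omega>\<in>space M. is_partition UNIV (X t \<omega>))
   \<and> (\<forall>n t s. t \<ge> 0 \<longrightarrow> {\<omega>\<in>space M. restr n (X t \<omega>) = s} \<in> sets M)
   \<and> (\<forall>n. \<forall>\<omega>\<in>space M. \<forall>t\<ge>0.
        (\<exists>e>0. \<forall>u. t \<le> u \<and> u < t + e \<longrightarrow> restr n (X u \<omega>) = restr n (X t \<omega>))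
      \<and> (t > 0 \<longrightarrow> (\<exists>e>0. \<exists>S. \<forall>u. t - e < u \<and> u < t \<longrightarrow> restr n (X u \<omega>) = S)))
   \<and> (\<forall>n ts ss. sorted_wrt (<) ts \<longrightarrow> (\<forall>t\<in>set ts. 0 \<le> t) \<longrightarrow> length ss = length ts \<longrightarrow>
        measure M {\<omega>\<in>space M. \<forall>i<length ts. restr n (X (ts ! i) \<omega>) = ss ! i}
        = chain_prob \<Lambda>0 \<Lambda>1 n 0 (singletons_upto n) ts ss)"

text \<open>Fixation time: first time the partition consists of the single block Z_+
  (infinite if this never happens).\<close>
definition fixation_time :: "(real \<Rightarrow> 'w \<Rightarrow> nat set set) \<Rightarrow> 'w \<Rightarrow> ennreal" where
  "fixation_time X \<omega> = (INF t\<in>{t. 0 \<le> t \<and> X t \<omega> = {UNIV}}. ennreal t)"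

definition phi :: "real measure \<Rightarrow> real measure \<Rightarrow> nat \<Rightarrow> real" where
  "phi \<Lambda>0 \<Lambda>1 n = (\<Sum>k=2..n. real (k - 1) * real (n choose k) * lam \<Lambda>1 n k) + measure \<Lambda>0 {0..1} * real n"

end

theory Submission
  imports Defs
begin

text \<open>
  A Lyapunov argument for the restriction of the coalescent to {0..n}. Let b(P) be the number
  of blocks of P not containing 0 and F(P) = \<Sum>m=1..b(P). 1 / phi m. Since phi is nondecreasing,
  a merger that removes j such blocks lowers F by at least j / phi b, and phi b is exactly the
  rate at which b decreases; hence the generator drift of F is at most -1 in every state but the
  single block. So E F(\<Pi>_n(t)) decreases at least at the rate P(\<Pi>_n(t) \<noteq> single block), and
  the integral over time of this probability is at most F(singletons) \<le> \<Sum>m. 1 / phi m.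
  Letting n \<rightarrow> \<infinity> by monotone convergence bounds \<integral> P(\<zeta> > t) dt = E \<zeta>, where the time integral
  is replaced by Riemann sums of mesh h, at the cost of an additive h.
\<close>

section \<open>Partitions and mergers\<close>

lemma is_partition_merge_blocks:
  assumes P: "is_partition A P" and K: "K \<subseteq> P" "K \<noteq> {}"
  shows "is_partition A (P - K \<union> {\<Union>K})"
proof -
  have p: "{} \<notin> P" "\<Union>P = A" "\<And>B C. B \<in> P \<Longrightarrow> C \<in> P \<Longrightarrow> B \<noteq> C \<Longrightarrow> B \<inter> C = {}"
    using P unfolding is_partition_def by blast+
  have disj: "B \<inter> \<Union>K = {}" if "B \<in> P - K" for B
    using that K(1) p(3) by blast
  obtain C where "C \<in> K" using K(2) by blast
  then have "\<Union>K \<noteq> {}" using K(1) p(1) by (metis Union_upper subset_empty subsetD)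
  moreover have "\<Union>(P - K \<union> {\<Union>K}) = A" using K(1) p(2) by blast
  moreover have "B \<inter> C = {}" if BC: "B \<in> P - K \<union> {\<Union>K}" "C \<in> P - K \<union> {\<Union>K}" "B \<noteq> C" for B C
  proof -
    consider "B \<in> P - K" "C \<in> P - K" | "B = \<Union>K" "C \<in> P - K" | "B \<in> P - K" "C = \<Union>K"
      using BC by blast
    then show ?thesis
      by cases (use BC p(3) disj in \<open>blast, metis disj Int_commute, metis disj\<close>)
  qed
  ultimately show ?thesis
    using p(1) unfolding is_partition_def by blast
qed

lemma Union_blocks_notin:
  assumes P: "is_partition A P" and K: "K \<subseteq> P" "K \<noteq> {}"
  shows "\<Union>K \<notin> P - K"
proof
  assume U: "\<Union>K \<in> P - K"
  have p: "{} \<notin> P" "\<And>B C. B \<in> P \<Longrightarrow> C \<in> P \<Longrightarrow> B \<noteq> C \<Longrightarrow> B \<inter> C = {}"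
    using P unfolding is_partition_def by blast+
  obtain C where C: "C \<in> K" using K(2) by blast
  have "C \<in> P" "C \<noteq> \<Union>K" using C K(1) U by auto
  then have "C \<inter> \<Union>K = {}" using U by (intro p(2)) auto
  moreover have "C \<noteq> {}" using \<open>C \<in> P\<close> p(1) by blast
  ultimately show False using C by blast
qed

lemma finite_partitions_upto: "finite (partitions_upto n)"
proof -
  have "partitions_upto n \<subseteq> Pow (Pow {..n})"
    unfolding partitions_upto_def is_partition_def by auto
  then show ?thesis by (rule finite_subset) auto
qed

lemma finite_nzb: "P \<in> partitions_upto n \<Longrightarrow> finite (nzb P)"
  unfolding partitions_upto_def is_partition_def nzb_def
  by (rule finite_subset[of _ "Pow {..n}"]) auto

lemma nzb_subset: "nzb P \<subseteq> P"
  unfolding nzb_def by auto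

lemma single_block_in_partitions_upto: "{{..n}} \<in> partitions_upto n"
  unfolding partitions_upto_def is_partition_def by auto

lemma nzb_single_block: "nzb {{..n}} = {}"
  unfolding nzb_def by auto

lemma singletons_upto_in_partitions_upto: "singletons_upto n \<in> partitions_upto n"
  unfolding partitions_upto_def is_partition_def singletons_upto_def by auto

lemma card_nzb_singletons_upto: "card (nzb (singletons_upto n)) = n"
proof -
  have "nzb (singletons_upto n) = (\<lambda>i. {i}) ` {1..n}"
    unfolding nzb_def singletons_upto_def by (auto simp: image_iff Suc_le_eq)
  then show ?thesis by (simp add: card_image)
qed

lemma nzb_empty_iff_single_block:
  assumes "P \<in> partitions_upto n"
  shows "nzb P = {} \<longleftrightarrow> P = {{..n}}"
proof
  have p: "\<Union>P = {..n}" "\<And>B C. B \<in> P \<Longrightarrow> C \<in> P \<Longrightarrow> B \<noteq> C \<Longrightarrow> B \<inter> C = {}"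
    using assms unfolding partitions_upto_def is_partition_def by blast+
  assume "nzb P = {}"
  then have "0 \<in> B" if "B \<in> P" for B using that unfolding nzb_def by auto
  then have "B = C" if "B \<in> P" "C \<in> P" for B C using that p(2) by blast
  moreover obtain B where "B \<in> P" using p(1) by auto
  ultimately have "P = {B}" by blast
  then show "P = {{..n}}" using p(1) by simp
qed (simp add: nzb_single_block)

lemma merge_in_partitions_upto:
  assumes "P \<in> partitions_upto n" "K \<subseteq> P" "K \<noteq> {}"
  shows "merge P K \<in> partitions_upto n"
  using assms is_partition_merge_blocks unfolding partitions_upto_def merge_def by blast

lemma merge0_eq_merge: "K \<subseteq> nzb P \<Longrightarrow> merge0 P K = merge P (K \<union> {B\<in>P. 0 \<in> B})"
  unfolding merge0_def merge_def nzb_def by auto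

lemma merge0_in_partitions_upto:
  assumes P: "P \<in> partitions_upto n" and K: "K \<subseteq> nzb P"
  shows "merge0 P K \<in> partitions_upto n"
proof -
  have "\<exists>B\<in>P. 0 \<in> B"
    using P unfolding partitions_upto_def is_partition_def by auto
  then show ?thesis
    unfolding merge0_eq_merge[OF K]
    by (intro merge_in_partitions_upto[OF P]) (use K nzb_subset in auto)
qed

lemma card_nzb_merge:
  assumes P: "P \<in> partitions_upto n" and K: "K \<subseteq> nzb P" "K \<noteq> {}"
  shows "card (nzb (merge P K)) = card (nzb P) - card K + 1"
proof -
  have "\<Union>K \<notin> nzb P - K"
    using Union_blocks_notin[of "{..n}" P K] P K nzb_subset
    unfolding partitions_upto_def by blast
  moreover have "nzb (merge P K) = insert (\<Union>K) (nzb P - K)"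
    using K unfolding nzb_def merge_def by auto
  moreover have "card (nzb P - K) = card (nzb P) - card K"
    using K(1) finite_nzb[OF P] by (meson card_Diff_subset finite_subset)
  ultimately show ?thesis
    using finite_nzb[OF P] by simp
qed

lemma card_nzb_merge0:
  assumes P: "P \<in> partitions_upto n" and K: "K \<subseteq> nzb P"
  shows "card (nzb (merge0 P K)) = card (nzb P) - card K"
proof -
  have "0 \<in> \<Union>{B\<in>P. 0 \<in> B}"
    using P unfolding partitions_upto_def is_partition_def by auto
  then have "nzb (merge0 P K) = nzb P - K"
    unfolding nzb_def merge0_def by blast
  then show ?thesis
    using K finite_nzb[OF P] by (metis card_Diff_subset finite_subset)
qed

section \<open>Restrictions and the fixation time\<close>

lemma restr_Suc_eq_single_block:
  assumes "restr (Suc m) Q = {{..Suc m}}" shows "restr m Q = {{..m}}"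
proof
  show "restr m Q \<subseteq> {{..m}}"
  proof
    fix x assume "x \<in> restr m Q"
    then obtain B where B: "B \<in> Q" "x = B \<inter> {..m}" "x \<noteq> {}" unfolding restr_def by auto
    then have "B \<inter> {..Suc m} \<noteq> {}" by auto
    then have "B \<inter> {..Suc m} \<in> restr (Suc m) Q" using B(1) unfolding restr_def by auto
    then have e: "B \<inter> {..Suc m} = {..Suc m}" using assms by (metis singletonD)
    have "B \<inter> {..m} = (B \<inter> {..Suc m}) \<inter> {..m}" by auto
    also have "\<dots> = {..m}" unfolding e by auto
    finally have "B \<inter> {..m} = {..m}" .
    then show "x \<in> {{..m}}" using B by auto
  qed
  show "{{..m}} \<subseteq> restr m Q"
  proof -
    have "{..Suc m} \<in> restr (Suc m) Q" using assms by auto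
    then obtain B where B: "B \<in> Q" "{..Suc m} = B \<inter> {..Suc m}" unfolding restr_def by auto
    have "B \<inter> {..m} = (B \<inter> {..Suc m}) \<inter> {..m}" by auto
    also have "\<dots> = {..m}" unfolding B(2)[symmetric] by auto
    finally have "B \<inter> {..m} = {..m}" .
    then have "{..m} \<in> restr m Q" using B(1) unfolding restr_def by (auto intro!: image_eqI[where x=B])
    then show ?thesis by auto
  qed
qed

lemma single_block_iff_restr:
  assumes "is_partition UNIV Q"
  shows "Q = {UNIV} \<longleftrightarrow> (\<forall>m. restr m Q = {{..m}})"
proof
  assume "Q = {UNIV}" then show "\<forall>m. restr m Q = {{..m}}" unfolding restr_def by auto
next
  assume r: "\<forall>m. restr m Q = {{..m}}"
  have p: "{} \<notin> Q" "\<Union>Q = UNIV" "\<forall>B\<in>Q. \<forall>C\<in>Q. B \<noteq> C \<longrightarrow> B \<inter> C = {}"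
    using assms unfolding is_partition_def by auto
  obtain B0 where B0: "B0 \<in> Q" "0 \<in> B0" using p(2) by blast
  have "m \<in> B0" for m
  proof -
    have "B0 \<inter> {..m} \<in> restr m Q" using B0 unfolding restr_def by auto
    then have "B0 \<inter> {..m} = {..m}" using r by auto
    then show ?thesis by auto
  qed
  then have U: "B0 = UNIV" by auto
  have "C = B0" if C: "C \<in> Q" for C
  proof (rule ccontr)
    assume "C \<noteq> B0"
    then have "C \<inter> B0 = {}" using p(3) C B0(1) by blast
    then have "C = {}" using U by auto
    then show False using p(1) C by auto
  qed
  then show "Q = {UNIV}" using B0(1) U by auto
qed

lemma fixation_time_le_grid_sum:
  assumes "0 < h"
  shows "fixation_time X \<omega>
    \<le> ennreal h + (\<Sum>j. ennreal h * indicator {\<omega>. X (real (Suc j) * h) \<omega> \<noteq> {UNIV}} \<omega>)"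
proof (cases "\<exists>j. X (real (Suc j) * h) \<omega> = {UNIV}")
  case True
  define j0 where "j0 = (LEAST j. X (real (Suc j) * h) \<omega> = {UNIV})"
  have fixed: "X (real (Suc j0) * h) \<omega> = {UNIV}" unfolding j0_def by (rule LeastI_ex[OF True])
  have unfixed: "X (real (Suc j) * h) \<omega> \<noteq> {UNIV}" if "j < j0" for j
    using that unfolding j0_def by (rule not_less_Least)
  have "fixation_time X \<omega> \<le> ennreal (real (Suc j0) * h)"
    unfolding fixation_time_def using fixed assms by (intro INF_lower) auto
  also have "\<dots> = ennreal h + (\<Sum>j<j0. ennreal h * indicator {\<omega>. X (real (Suc j) * h) \<omega> \<noteq> {UNIV}} \<omega>)"
    using assms unfixed by (simp add: ennreal_plus[symmetric] ennreal_of_nat_eq_real_of_nat ennreal_mult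
        algebra_simps)
  also have "\<dots> \<le> ennreal h + (\<Sum>j. ennreal h * indicator {\<omega>. X (real (Suc j) * h) \<omega> \<noteq> {UNIV}} \<omega>)"
    by (intro add_left_mono sum_le_suminf) auto
  finally show ?thesis .
next
  case False
  then have "(\<Sum>j. ennreal h * indicator {\<omega>. X (real (Suc j) * h) \<omega> \<noteq> {UNIV}} \<omega>) = (\<Sum>j. ennreal h)"
    by simp
  also have "\<dots> = \<top>"
    using assms by (intro summable_iff_suminf_neq_top) (auto simp: summable_const_iff)
  finally show ?thesis by simp
qed

section \<open>The function phi\<close>

definition merge_poly :: "nat \<Rightarrow> real \<Rightarrow> real" where
  "merge_poly b x = (\<Sum>k=2..b. real (k - 1) * real (b choose k) * (x ^ (k - 2) * (1 - x) ^ (b - k)))"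

lemma bernstein_sum: "(\<Sum>k\<le>m. real (m choose k) * x ^ k * (1 - x) ^ (m - k)) = 1"
  using binomial_ring[of x "1 - x" m] by simp

lemma bernstein_mean:
  "(\<Sum>k=1..b. real k * real (b choose k) * (x ^ (k - 1) * (1 - x) ^ (b - k))) = real b"
proof (cases b)
  case (Suc m)
  have "(\<Sum>k=1..b. real k * real (b choose k) * (x ^ (k - 1) * (1 - x) ^ (b - k)))
      = real b * (\<Sum>k=1..Suc m. real (m choose (k - 1)) * x ^ (k - 1) * (1 - x) ^ (Suc m - k))"
    unfolding sum_distrib_left
  proof (rule sum.cong)
    fix k assume k: "k \<in> {1..Suc m}"
    have "k * (b choose k) = b * (m choose (k - 1))"
      using times_binomial_minus1_eq[of k b] k Suc by simp
    then have "real k * real (b choose k) = real b * real (m choose (k - 1))"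
      by (metis of_nat_mult)
    then show "real k * real (b choose k) * (x ^ (k - 1) * (1 - x) ^ (b - k)) =
      real b * (real (m choose (k - 1)) * x ^ (k - 1) * (1 - x) ^ (Suc m - k))"
      using Suc by (simp add: algebra_simps)
  qed (use Suc in simp)
  also have "(\<Sum>k=1..Suc m. real (m choose (k - 1)) * x ^ (k - 1) * (1 - x) ^ (Suc m - k))
      = (\<Sum>k\<le>m. real (m choose k) * x ^ k * (1 - x) ^ (m - k))"
    by (simp only: One_nat_def sum.shift_bounds_cl_Suc_ivl) (simp add: atMost_atLeast0)
  finally show ?thesis by (simp add: bernstein_sum)
qed simp

lemma bernstein_first_moment:
  "(\<Sum>k\<le>b. real k * real (b choose k) * x ^ k * (1 - x) ^ (b - k)) = real b * x"
proof -
  have "(\<Sum>k\<le>b. real k * real (b choose k) * x ^ k * (1 - x) ^ (b - k))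
      = (\<Sum>k=1..b. x * (real k * real (b choose k) * (x ^ (k - 1) * (1 - x) ^ (b - k))))"
  proof (rule sum.mono_neutral_cong_right)
    fix k assume "k \<in> {1..b}"
    then have "x ^ k = x * x ^ (k - 1)" by (cases k) auto
    then show "real k * real (b choose k) * x ^ k * (1 - x) ^ (b - k) =
      x * (real k * real (b choose k) * (x ^ (k - 1) * (1 - x) ^ (b - k)))" by simp
  qed (auto simp: atLeast1_atMost_eq_remove0)
  also have "\<dots> = x * real b" by (simp only: sum_distrib_left[symmetric] bernstein_mean)
  finally show ?thesis by simp
qed

lemma merge_poly_identity: "x\<^sup>2 * merge_poly b x = real b * x - 1 + (1 - x) ^ b"
proof (cases b)
  case (Suc m)
  have "(\<Sum>k\<le>b. (real k - 1) * real (b choose k) * x ^ k * (1 - x) ^ (b - k))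
      = (\<Sum>k\<le>b. real k * real (b choose k) * x ^ k * (1 - x) ^ (b - k))
        - (\<Sum>k\<le>b. real (b choose k) * x ^ k * (1 - x) ^ (b - k))"
    by (simp add: sum_subtractf[symmetric] algebra_simps)
  also have "\<dots> = real b * x - 1" using bernstein_first_moment bernstein_sum[of b x] by simp
  finally have "(\<Sum>k\<le>b. (real k - 1) * real (b choose k) * x ^ k * (1 - x) ^ (b - k))
      = real b * x - 1" .
  moreover have "{..b} = {0, 1} \<union> {2..b}" using Suc by auto
  then have "(\<Sum>k\<le>b. (real k - 1) * real (b choose k) * x ^ k * (1 - x) ^ (b - k))
      = - ((1 - x) ^ b) + (\<Sum>k=2..b. (real k - 1) * real (b choose k) * x ^ k * (1 - x) ^ (b - k))"
    by (simp only:) (subst sum.union_disjoint; simp)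
  moreover have "(\<Sum>k=2..b. (real k - 1) * real (b choose k) * x ^ k * (1 - x) ^ (b - k))
      = x\<^sup>2 * merge_poly b x"
    unfolding merge_poly_def sum_distrib_left
  proof (rule sum.cong[OF refl])
    fix k assume k: "k \<in> {2..b}"
    then have "x ^ k = x\<^sup>2 * x ^ (k - 2)" by (metis le_add_diff_inverse power_add atLeastAtMost_iff)
    moreover have "real (k - 1) = real k - 1" using k by auto
    ultimately show "(real k - 1) * real (b choose k) * x ^ k * (1 - x) ^ (b - k) =
      x\<^sup>2 * (real (k - 1) * real (b choose k) * (x ^ (k - 2) * (1 - x) ^ (b - k)))" by simp
  qed
  ultimately show ?thesis by simp
qed (simp add: merge_poly_def)

lemma merge_poly_at_0: "merge_poly b 0 = real (b choose 2)"
proof -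
  have "merge_poly b 0 = (\<Sum>k=2..b. if k = 2 then real (b choose 2) else 0)"
    unfolding merge_poly_def by (rule sum.cong) auto
  then show ?thesis by (cases "2 \<le> b") auto
qed

lemma merge_poly_le_Suc:
  assumes "0 \<le> x" "x \<le> 1"
  shows "merge_poly b x \<le> merge_poly (Suc b) x"
proof (cases "x = 0")
  case True
  have "b choose 2 \<le> Suc b choose 2" by (simp add: numeral_2_eq_2)
  then show ?thesis using True by (simp add: merge_poly_at_0)
next
  case False
  have "x\<^sup>2 * (merge_poly (Suc b) x - merge_poly b x) = x * (1 - (1 - x) ^ b)"
    unfolding right_diff_distrib merge_poly_identity by (simp add: algebra_simps)
  also have "\<dots> \<ge> 0" using assms by (simp add: power_le_one)
  finally show ?thesis using False by (simp add: zero_le_mult_iff)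
qed

lemma merge_poly_mono:
  assumes "0 \<le> x" "x \<le> 1" "b \<le> b'"
  shows "merge_poly b x \<le> merge_poly b' x"
  using assms(3)
proof (induction b' rule: dec_induct)
  case (step m)
  then show ?case using merge_poly_le_Suc[OF assms(1,2), of m] by linarith
qed simp

locale unit_interval_measure =
  fixes L :: "real measure"
  assumes finite: "finite_measure L"
    and sets_eq_borel: "sets L = sets borel"
    and null_outside: "emeasure L (- {0..1}) = 0"
begin

lemma space_eq_UNIV: "space L = UNIV"
  using sets_eq_imp_space_eq[OF sets_eq_borel] by simp

lemma AE_in_unit_interval: "AE x in L. x \<in> {0..1}"
  by (rule AE_I'[of "- {0..1}"]) (use null_outside sets_eq_borel in \<open>auto simp: null_sets_def\<close>)

lemma integrable_bernstein_monomial: "integrable L (\<lambda>x. x ^ a * (1 - x) ^ c)"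
proof (rule finite_measure.integrable_const_bound[OF finite, where B=1])
  show "AE x in L. norm (x ^ a * (1 - x) ^ c) \<le> 1"
    using AE_in_unit_interval
    by eventually_elim (auto simp: abs_mult power_abs intro!: mult_le_one power_le_one)
  show "(\<lambda>x. x ^ a * (1 - x) ^ c) \<in> borel_measurable L"
    unfolding measurable_cong_sets[OF sets_eq_borel refl] by measurable
qed

lemma integral_bernstein_monomial_nonneg: "0 \<le> (\<integral>x. x ^ a * (1 - x) ^ c \<partial>L)"
  by (rule integral_nonneg_AE) (use AE_in_unit_interval in eventually_elim, auto)

lemma measure_UNIV_eq: "measure L UNIV = measure L {0..1}"
proof -
  have "emeasure L UNIV = emeasure L {0..1} + emeasure L (- {0..1})"
    using sets_eq_borel by (subst plus_emeasure) (auto simp: space_eq_UNIV[symmetric])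
  then show ?thesis using null_outside by (simp add: measure_def)
qed

lemma integrable_merge_poly: "integrable L (merge_poly b)"
  unfolding merge_poly_def by (auto intro!: integrable_bernstein_monomial)

lemma integral_merge_poly:
  "(\<integral>x. merge_poly b x \<partial>L)
   = (\<Sum>k=2..b. real (k - 1) * real (b choose k) * (\<integral>x. x ^ (k - 2) * (1 - x) ^ (b - k) \<partial>L))"
  unfolding merge_poly_def
  by (subst Bochner_Integration.integral_sum) (auto intro!: integrable_bernstein_monomial)

end

lemma lam_nonneg: "unit_interval_measure L1 \<Longrightarrow> 0 \<le> lam L1 b k"
  unfolding lam_def by (rule unit_interval_measure.integral_bernstein_monomial_nonneg)

lemma mu_nonneg: "unit_interval_measure L0 \<Longrightarrow> 0 \<le> mu L0 b k"
  unfolding mu_def by (rule unit_interval_measure.integral_bernstein_monomial_nonneg)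

lemma phi_nonneg: "unit_interval_measure L1 \<Longrightarrow> 0 \<le> phi L0 L1 b"
  unfolding phi_def by (intro add_nonneg_nonneg sum_nonneg mult_nonneg_nonneg lam_nonneg) auto

lemma phi_eq_integral:
  "unit_interval_measure L1 \<Longrightarrow>
   phi L0 L1 b = (\<integral>x. merge_poly b x \<partial>L1) + measure L0 {0..1} * real b"
  unfolding phi_def lam_def by (simp add: unit_interval_measure.integral_merge_poly)

lemma phi_mono:
  assumes L1: "unit_interval_measure L1" and "b \<le> b'"
  shows "phi L0 L1 b \<le> phi L0 L1 b'"
proof -
  interpret unit_interval_measure L1 by (rule L1)
  have "(\<integral>x. merge_poly b x \<partial>L1) \<le> (\<integral>x. merge_poly b' x \<partial>L1)"
  proof (intro integral_mono_AE integrable_merge_poly)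
    show "AE x in L1. merge_poly b x \<le> merge_poly b' x"
      using AE_in_unit_interval by eventually_elim (use merge_poly_mono \<open>b \<le> b'\<close> in auto)
  qed
  moreover have "measure L0 {0..1} * real b \<le> measure L0 {0..1} * real b'"
    using \<open>b \<le> b'\<close> by (simp add: mult_left_mono)
  ultimately show ?thesis by (simp add: phi_eq_integral[OF L1])
qed

lemma sum_mu_weighted:
  assumes L0: "unit_interval_measure L0"
  shows "(\<Sum>k=1..b. real k * real (b choose k) * mu L0 b k) = real b * measure L0 {0..1}"
proof -
  interpret unit_interval_measure L0 by (rule L0)
  have "(\<Sum>k=1..b. real k * real (b choose k) * mu L0 b k)
      = (\<integral>x. (\<Sum>k=1..b. real k * real (b choose k) * (x ^ (k - 1) * (1 - x) ^ (b - k))) \<partial>L0)"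
    unfolding mu_def
    by (subst Bochner_Integration.integral_sum) (auto intro!: integrable_bernstein_monomial)
  also have "\<dots> = real b * measure L0 UNIV" by (simp only: bernstein_mean) (simp add: space_eq_UNIV)
  finally show ?thesis by (simp add: measure_UNIV_eq)
qed

section \<open>The generator and the transition function\<close>

lemma sum_gen_row:
  assumes "P \<in> partitions_upto n"
  shows "(\<Sum>C\<in>partitions_upto n. gen L0 L1 n P C) = 0"
proof -
  have "(\<Sum>C\<in>partitions_upto n - {P}. gen L0 L1 n P C) = (\<Sum>C\<in>partitions_upto n - {P}. rate L0 L1 P C)"
    unfolding gen_def by (rule sum.cong) auto
  then show ?thesis
    using assms finite_partitions_upto by (simp add: sum.remove gen_def)
qed

lemma rate_eq_0_if_nzb_empty:
  assumes "nzb P = {}"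
  shows "rate L0 L1 P C = 0"
proof -
  have no_mergers: "{K. K \<subseteq> nzb P \<and> 2 \<le> card K \<and> merge P K = C} = {}"
    "{K. K \<subseteq> nzb P \<and> 1 \<le> card K \<and> merge0 P K = C} = {}"
    using assms by auto
  show ?thesis by (simp only: rate_def no_mergers sum.empty add_0)
qed

lemma gen_eq_0_if_nzb_empty: "nzb P = {} \<Longrightarrow> gen L0 L1 n P C = 0"
  unfolding gen_def by (cases "P = C") (simp_all add: rate_eq_0_if_nzb_empty)

lemma sum_subsets_by_card:
  assumes "finite B"
  shows "(\<Sum>K | K \<subseteq> B \<and> a \<le> card K. w (card K)) = (\<Sum>k=a..card B. real (card B choose k) * w k)"
proof -
  have fin: "finite {K. K \<subseteq> B \<and> a \<le> card K}" using assms by (auto intro: finite_subset[of _ "Pow B"])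
  have img: "card ` {K. K \<subseteq> B \<and> a \<le> card K} \<subseteq> {a..card B}"
    using assms by (auto intro: card_mono)
  have "(\<Sum>K | K \<subseteq> B \<and> a \<le> card K. w (card K))
     = (\<Sum>k=a..card B. \<Sum>K | K \<subseteq> B \<and> a \<le> card K \<and> card K = k. w (card K))"
    by (subst sum.group[OF fin _ img, symmetric]) simp_all
  also have "\<dots> = (\<Sum>k=a..card B. \<Sum>K | K \<subseteq> B \<and> card K = k. w k)"
    by (intro sum.cong refl) (auto intro: sum.cong)
  finally show ?thesis using n_subsets[OF assms] by simp
qed

lemma gen_drift_eq:
  assumes P: "P \<in> partitions_upto n"
  defines "b \<equiv> card (nzb P)"
  shows "(\<Sum>C\<in>partitions_upto n. gen L0 L1 n P C * F C)
    = (\<Sum>K | K \<subseteq> nzb P \<and> 2 \<le> card K. lam L1 b (card K) * (F (merge P K) - F P))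
    + (\<Sum>K | K \<subseteq> nzb P \<and> 1 \<le> card K. mu L0 b (card K) * (F (merge0 P K) - F P))"
proof -
  define A1 where "A1 = {K. K \<subseteq> nzb P \<and> 2 \<le> card K}"
  define A0 where "A0 = {K. K \<subseteq> nzb P \<and> 1 \<le> card K}"
  have fin: "finite A1" "finite A0"
    unfolding A1_def A0_def using finite_nzb[OF P] by (auto intro: finite_subset[of _ "Pow (nzb P)"])
  have img: "merge P ` A1 \<subseteq> partitions_upto n" "merge0 P ` A0 \<subseteq> partitions_upto n"
    unfolding A1_def A0_def using P nzb_subset
    by (auto intro!: merge_in_partitions_upto merge0_in_partitions_upto)
  have "(\<Sum>C\<in>partitions_upto n. gen L0 L1 n P C * F C)
      = (\<Sum>C\<in>partitions_upto n. gen L0 L1 n P C * (F C - F P))"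
    using sum_gen_row[OF P] by (simp add: right_diff_distrib sum_subtractf sum_distrib_right[symmetric])
  also have "\<dots> = (\<Sum>C\<in>partitions_upto n. rate L0 L1 P C * (F C - F P))"
    unfolding gen_def by (rule sum.cong) auto
  also have "\<dots> = (\<Sum>C\<in>partitions_upto n.
        (\<Sum>K\<in>{K\<in>A1. merge P K = C}. lam L1 b (card K) * (F (merge P K) - F P))
      + (\<Sum>K\<in>{K\<in>A0. merge0 P K = C}. mu L0 b (card K) * (F (merge0 P K) - F P)))"
    unfolding rate_def A1_def A0_def b_def
    by (intro sum.cong refl) (simp add: sum_distrib_right distrib_right conj_assoc)
  also have "\<dots> = (\<Sum>K\<in>A1. lam L1 b (card K) * (F (merge P K) - F P))
      + (\<Sum>K\<in>A0. mu L0 b (card K) * (F (merge0 P K) - F P))"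
    by (simp only: sum.distrib sum.group[OF fin(1) finite_partitions_upto img(1)]
        sum.group[OF fin(2) finite_partitions_upto img(2)])
  finally show ?thesis unfolding A1_def A0_def .
qed

lemma gpow_Suc_right:
  assumes "P \<in> partitions_upto n" "P' \<in> partitions_upto n"
  shows "gpow L0 L1 n (Suc k) P P' = (\<Sum>C\<in>partitions_upto n. gpow L0 L1 n k P C * gen L0 L1 n C P')"
  using assms(1)
proof (induction k arbitrary: P)
  case 0
  have "gpow L0 L1 n (Suc 0) P P' = gen L0 L1 n P P'"
    using assms(2) finite_partitions_upto by (simp add: if_distrib[of "\<lambda>x. _ * x"] cong: if_cong)
  also have "\<dots> = (\<Sum>C\<in>partitions_upto n. (if P = C then 1 else 0) * gen L0 L1 n C P')"
    using 0 finite_partitions_upto by (simp add: if_distrib[of "\<lambda>x. x * _"] cong: if_cong)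
  finally show ?case by simp
next
  case (Suc k)
  have "gpow L0 L1 n (Suc (Suc k)) P P'
      = (\<Sum>C\<in>partitions_upto n. gen L0 L1 n P C * (\<Sum>D\<in>partitions_upto n. gpow L0 L1 n k C D * gen L0 L1 n D P'))"
    using Suc.IH by (simp cong: sum.cong)
  also have "\<dots> = (\<Sum>D\<in>partitions_upto n. (\<Sum>C\<in>partitions_upto n. gen L0 L1 n P C * gpow L0 L1 n k C D) * gen L0 L1 n D P')"
    by (simp only: sum_distrib_left sum_distrib_right mult.assoc) (rule sum.swap)
  finally show ?case by simp
qed

lemma sum_gpow_row:
  assumes "P \<in> partitions_upto n"
  shows "(\<Sum>P'\<in>partitions_upto n. gpow L0 L1 n k P P') = (if k = 0 then 1 else 0)"
  using assms
proof (induction k arbitrary: P)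
  case 0
  then show ?case using finite_partitions_upto by (simp add: sum.delta)
next
  case (Suc k)
  have "(\<Sum>P'\<in>partitions_upto n. gpow L0 L1 n (Suc k) P P')
     = (\<Sum>C\<in>partitions_upto n. gen L0 L1 n P C * (\<Sum>P'\<in>partitions_upto n. gpow L0 L1 n k C P'))"
    by (simp only: gpow.simps sum_distrib_left) (rule sum.swap)
  also have "\<dots> = (\<Sum>C\<in>partitions_upto n. gen L0 L1 n P C) * (if k = 0 then 1 else 0)"
    using Suc.IH by (simp add: sum_distrib_right cong: sum.cong)
  finally show ?case using sum_gen_row[OF Suc.prems] by simp
qed

definition gen_norm :: "real measure \<Rightarrow> real measure \<Rightarrow> nat \<Rightarrow> real" where
  "gen_norm L0 L1 n = (\<Sum>P\<in>partitions_upto n. \<Sum>C\<in>partitions_upto n. \<bar>gen L0 L1 n P C\<bar>)"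

lemma gen_norm_nonneg: "0 \<le> gen_norm L0 L1 n"
  unfolding gen_norm_def by (intro sum_nonneg) auto

lemma abs_gpow_le:
  assumes "P \<in> partitions_upto n"
  shows "\<bar>gpow L0 L1 n k P P'\<bar> \<le> gen_norm L0 L1 n ^ k"
  using assms
proof (induction k arbitrary: P)
  case (Suc k)
  have row: "(\<Sum>C\<in>partitions_upto n. \<bar>gen L0 L1 n P C\<bar>) \<le> gen_norm L0 L1 n"
    unfolding gen_norm_def using Suc.prems finite_partitions_upto
    by (intro member_le_sum) (auto intro: sum_nonneg)
  have "\<bar>gpow L0 L1 n (Suc k) P P'\<bar> \<le> (\<Sum>C\<in>partitions_upto n. \<bar>gen L0 L1 n P C\<bar> * \<bar>gpow L0 L1 n k C P'\<bar>)"
    by (simp add: abs_mult[symmetric])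
  also have "\<dots> \<le> (\<Sum>C\<in>partitions_upto n. \<bar>gen L0 L1 n P C\<bar>) * gen_norm L0 L1 n ^ k"
    unfolding sum_distrib_right using Suc.IH by (intro sum_mono mult_left_mono) auto
  also have "\<dots> \<le> gen_norm L0 L1 n * gen_norm L0 L1 n ^ k"
    using row gen_norm_nonneg by (intro mult_right_mono) auto
  finally show ?case by simp
qed simp

lemma summable_gpow_series:
  assumes "P \<in> partitions_upto n"
  shows "summable (\<lambda>k. gpow L0 L1 n k P P' / fact k * t ^ k)"
proof (rule summable_comparison_test[OF _ summable_exp[of "gen_norm L0 L1 n * \<bar>t\<bar>"]])
  have "\<bar>gpow L0 L1 n k P P'\<bar> * \<bar>t\<bar> ^ k / fact k \<le> gen_norm L0 L1 n ^ k * \<bar>t\<bar> ^ k / fact k" for k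
    using abs_gpow_le[OF assms] by (intro divide_right_mono mult_right_mono) auto
  then show "\<exists>N. \<forall>k\<ge>N. norm (gpow L0 L1 n k P P' / fact k * t ^ k)
      \<le> inverse (fact k) * (gen_norm L0 L1 n * \<bar>t\<bar>) ^ k"
    by (auto simp: abs_mult power_abs power_mult_distrib field_simps)
qed

lemma trans_prob_eq_suminf: "trans_prob L0 L1 n t P P' = (\<Sum>k. gpow L0 L1 n k P P' / fact k * t ^ k)"
  unfolding trans_prob_def by (simp add: field_simps)

text \<open>Kolmogorov's forward equation, by termwise differentiation of the exponential series.\<close>
lemma trans_prob_has_derivative:
  assumes P: "P \<in> partitions_upto n" and P': "P' \<in> partitions_upto n"
  shows "((\<lambda>t. trans_prob L0 L1 n t P P') has_real_derivative
          (\<Sum>C\<in>partitions_upto n. trans_prob L0 L1 n t P C * gen L0 L1 n C P')) (at t)"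
proof -
  let ?c = "\<lambda>C k. gpow L0 L1 n k P C / fact k"
  have "((\<lambda>t. \<Sum>k. ?c P' k * t ^ k) has_real_derivative (\<Sum>k. diffs (?c P') k * t ^ k)) (at t)"
    by (rule termdiffs_strong[OF summable_gpow_series[OF P, where t = "\<bar>t\<bar> + 1"]]) simp
  moreover have "diffs (?c P') k * t ^ k
      = (\<Sum>C\<in>partitions_upto n. ?c C k * t ^ k * gen L0 L1 n C P')" for k
  proof -
    have "diffs (?c P') k = gpow L0 L1 n (Suc k) P P' / fact k"
      unfolding diffs_def by (simp add: field_simps del: of_nat_Suc)
    then show ?thesis
      unfolding gpow_Suc_right[OF P P'] sum_divide_distrib
      by (simp add: sum_distrib_left sum_distrib_right mult_ac)
  qed
  moreover have "(\<Sum>k. \<Sum>C\<in>partitions_upto n. ?c C k * t ^ k * gen L0 L1 n C P')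
      = (\<Sum>C\<in>partitions_upto n. trans_prob L0 L1 n t P C * gen L0 L1 n C P')"
  proof -
    have "(\<Sum>k. \<Sum>C\<in>partitions_upto n. ?c C k * t ^ k * gen L0 L1 n C P')
        = (\<Sum>C\<in>partitions_upto n. \<Sum>k. ?c C k * t ^ k * gen L0 L1 n C P')"
      by (rule suminf_sum) (intro summable_mult2 summable_gpow_series[OF P])
    also have "\<dots> = (\<Sum>C\<in>partitions_upto n. trans_prob L0 L1 n t P C * gen L0 L1 n C P')"
      unfolding trans_prob_eq_suminf
      by (intro sum.cong refl suminf_mult2[symmetric] summable_gpow_series[OF P])
    finally show ?thesis .
  qed
  ultimately show ?thesis unfolding trans_prob_eq_suminf by simp
qed

lemma trans_prob_at_0: "trans_prob L0 L1 n 0 P P' = (if P = P' then 1 else 0)"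
  unfolding trans_prob_eq_suminf using powser_sums_zero[THEN sums_unique, of "\<lambda>k. gpow L0 L1 n k P P' / fact k"]
  by simp

lemma sum_trans_prob_row:
  assumes P: "P \<in> partitions_upto n"
  shows "(\<Sum>P'\<in>partitions_upto n. trans_prob L0 L1 n t P P') = 1"
proof -
  have "(\<Sum>P'\<in>partitions_upto n. trans_prob L0 L1 n t P P')
      = (\<Sum>k. \<Sum>P'\<in>partitions_upto n. gpow L0 L1 n k P P' / fact k * t ^ k)"
    unfolding trans_prob_eq_suminf by (rule suminf_sum[symmetric]) (rule summable_gpow_series[OF P])
  also have "\<dots> = (\<Sum>k. if k = 0 then 1 else 0)"
    by (rule suminf_cong) (simp flip: sum_divide_distrib sum_distrib_right add: sum_gpow_row[OF P])
  finally show ?thesis using sums_single[of 0 "\<lambda>_. 1::real"] by (simp add: sums_iff)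
qed

section \<open>The Lyapunov function\<close>

locale coalescent_rates =
  fixes L0 L1 :: "real measure"
  assumes L0: "unit_interval_measure L0" and L1: "unit_interval_measure L1"
    and phi_pos: "\<And>m. 1 \<le> m \<Longrightarrow> 0 < phi L0 L1 m"
begin

lemma rate_nonneg: "0 \<le> rate L0 L1 P C"
  unfolding rate_def by (intro add_nonneg_nonneg sum_nonneg lam_nonneg[OF L1] mu_nonneg[OF L0])

definition phi_partial_sum :: "nat \<Rightarrow> real" where
  "phi_partial_sum b = (\<Sum>m=1..b. 1 / phi L0 L1 m)"

lemma phi_partial_sum_nonneg: "0 \<le> phi_partial_sum b"
  unfolding phi_partial_sum_def using phi_pos by (auto intro!: sum_nonneg simp: less_imp_le)

lemma phi_partial_sum_diff_ge:
  assumes "j \<le> b"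
  shows "real j / phi L0 L1 b \<le> phi_partial_sum b - phi_partial_sum (b - j)"
  using assms
proof (induction j)
  case (Suc j)
  then obtain c where c: "b - j = Suc c" by (metis Suc_diff_Suc Suc_le_lessD)
  have "1 / phi L0 L1 b \<le> 1 / phi L0 L1 (Suc c)"
    using c phi_pos phi_mono[OF L1, of "Suc c" b] by (intro divide_left_mono) auto
  moreover have "b - Suc j = c" using c by arith
  then have "phi_partial_sum (b - j) = phi_partial_sum (b - Suc j) + 1 / phi L0 L1 (Suc c)"
    unfolding c by (simp add: phi_partial_sum_def)
  ultimately show ?case using Suc by (simp add: add_divide_distrib)
qed simp

definition lyapunov :: "nat set set \<Rightarrow> real" where
  "lyapunov P = phi_partial_sum (card (nzb P))"

text \<open>A merger of k blocks not containing 0 removes k - 1 of them (k if they merge with the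
  block of 0), and each removed block lowers the Lyapunov function by at least 1 / phi b.\<close>
lemma lyapunov_merge_le:
  assumes P: "P \<in> partitions_upto n" and K: "K \<subseteq> nzb P" "2 \<le> card K"
  shows "lyapunov (merge P K) - lyapunov P \<le> - (real (card K - 1) / phi L0 L1 (card (nzb P)))"
proof -
  have "card K \<le> card (nzb P)" using K(1) finite_nzb[OF P] by (simp add: card_mono)
  then have card_merge: "card (nzb (merge P K)) = card (nzb P) - (card K - 1)"
    using card_nzb_merge[OF P K(1)] K(2) by fastforce
  have "real (card K - 1) / phi L0 L1 (card (nzb P))
      \<le> phi_partial_sum (card (nzb P)) - phi_partial_sum (card (nzb P) - (card K - 1))"
    by (rule phi_partial_sum_diff_ge) (use \<open>card K \<le> card (nzb P)\<close> in arith)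
  then show ?thesis unfolding lyapunov_def card_merge by linarith
qed

lemma lyapunov_merge0_le:
  assumes P: "P \<in> partitions_upto n" and K: "K \<subseteq> nzb P"
  shows "lyapunov (merge0 P K) - lyapunov P \<le> - (real (card K) / phi L0 L1 (card (nzb P)))"
proof -
  have "card K \<le> card (nzb P)" using K finite_nzb[OF P] by (simp add: card_mono)
  then have "real (card K) / phi L0 L1 (card (nzb P))
      \<le> phi_partial_sum (card (nzb P)) - phi_partial_sum (card (nzb P) - card K)"
    by (rule phi_partial_sum_diff_ge)
  then show ?thesis unfolding lyapunov_def card_nzb_merge0[OF P K] by linarith
qed

text \<open>Weighted by the merger rates, the drops of the previous two lemmas add up to exactly phi b.\<close>
lemma gen_drift_lyapunov_le:
  assumes P: "P \<in> partitions_upto n"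
  shows "(\<Sum>C\<in>partitions_upto n. gen L0 L1 n P C * lyapunov C) \<le> (if nzb P = {} then 0 else -1)"
proof (cases "nzb P = {}")
  case False
  define b where "b = card (nzb P)"
  have "1 \<le> b" using False finite_nzb[OF P] unfolding b_def by (simp add: Suc_le_eq card_gt_0_iff)
  then have phi_b: "0 < phi L0 L1 b" by (rule phi_pos)
  have "(\<Sum>C\<in>partitions_upto n. gen L0 L1 n P C * lyapunov C)
      \<le> (\<Sum>K | K \<subseteq> nzb P \<and> 2 \<le> card K. lam L1 b (card K) * - (real (card K - 1) / phi L0 L1 b))
      + (\<Sum>K | K \<subseteq> nzb P \<and> 1 \<le> card K. mu L0 b (card K) * - (real (card K) / phi L0 L1 b))"
    unfolding gen_drift_eq[OF P] b_def
    by (intro add_mono sum_mono mult_left_mono lam_nonneg[OF L1] mu_nonneg[OF L0])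
      (blast intro: lyapunov_merge_le[OF P] lyapunov_merge0_le[OF P])+
  also have "\<dots> = - (1 / phi L0 L1 b) * (\<Sum>k=2..b. real (k - 1) * real (b choose k) * lam L1 b k)
      + - (1 / phi L0 L1 b) * (\<Sum>k=1..b. real k * real (b choose k) * mu L0 b k)"
    unfolding
      sum_subsets_by_card[OF finite_nzb[OF P], where w = "\<lambda>k. lam L1 b k * - (real (k - 1) / phi L0 L1 b)"]
      sum_subsets_by_card[OF finite_nzb[OF P], where w = "\<lambda>k. mu L0 b k * - (real k / phi L0 L1 b)"]
      b_def[symmetric] sum_distrib_left
    by (intro arg_cong2[where f = "(+)"] sum.cong refl) simp_all
  also have "\<dots> = - (1 / phi L0 L1 b) * phi L0 L1 b"
  proof -
    have "(\<Sum>k=2..b. real (k - 1) * real (b choose k) * lam L1 b k)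
        + (\<Sum>k=1..b. real k * real (b choose k) * mu L0 b k) = phi L0 L1 b"
      unfolding sum_mu_weighted[OF L0] phi_def by simp
    then show ?thesis by (simp only: distrib_left[symmetric])
  qed
  also have "\<dots> = -1" using phi_b by simp
  finally show ?thesis using False by simp
qed (simp add: gen_eq_0_if_nzb_empty)

lemma phi_partial_sum_le_suminf:
  "ennreal (phi_partial_sum m) \<le> (\<Sum>n. 1 / ennreal (phi L0 L1 (Suc n)))"
proof -
  have pos: "0 < phi L0 L1 (Suc k)" for k using phi_pos by simp
  have "ennreal (phi_partial_sum m) = (\<Sum>k<m. ennreal (1 / phi L0 L1 (Suc k)))"
    using pos unfolding phi_partial_sum_def
    by (simp add: sum.atLeast1_atMost_eq sum_ennreal less_imp_le)
  also have "\<dots> = (\<Sum>k<m. 1 / ennreal (phi L0 L1 (Suc k)))"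
    using pos by (intro sum.cong refl) (simp add: divide_ennreal[symmetric] less_imp_le)
  also have "\<dots> \<le> (\<Sum>n. 1 / ennreal (phi L0 L1 (Suc n)))"
    by (rule sum_le_suminf) auto
  finally show ?thesis .
qed

end

section \<open>The coalescent process\<close>

locale coalescent_process = coalescent_rates L0 L1 + prob_space M
  for L0 L1 :: "real measure" and M :: "'w measure" +
  fixes X :: "real \<Rightarrow> 'w \<Rightarrow> nat set set"
  assumes coalescent: "is_coalescent L0 L1 M X"
begin

lemma is_partition_X: "0 \<le> t \<Longrightarrow> \<omega> \<in> space M \<Longrightarrow> is_partition UNIV (X t \<omega>)"
  using coalescent[unfolded is_coalescent_def, THEN conjunct1] by blast

lemma restr_X_event: "0 \<le> t \<Longrightarrow> {\<omega>\<in>space M. restr n (X t \<omega>) = C} \<in> events"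
  using coalescent[unfolded is_coalescent_def, THEN conjunct2, THEN conjunct1] by blast

lemma prob_restr_X_eq:
  assumes "0 \<le> t"
  shows "prob {\<omega>\<in>space M. restr n (X t \<omega>) = C} = trans_prob L0 L1 n t (singletons_upto n) C"
proof -
  have "prob {\<omega>\<in>space M. \<forall>i<length [t]. restr n (X ([t] ! i) \<omega>) = [C] ! i}
      = chain_prob L0 L1 n 0 (singletons_upto n) [t] [C]"
    using coalescent[unfolded is_coalescent_def, THEN conjunct2, THEN conjunct2, THEN conjunct2,
        rule_format, where n = n and ts = "[t]" and ss = "[C]"] assms by simp
  then show ?thesis by simp
qed

lemma trans_prob_nonneg: "0 \<le> t \<Longrightarrow> 0 \<le> trans_prob L0 L1 n t (singletons_upto n) C"
  using prob_restr_X_eq by (metis measure_nonneg)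

definition absorption_prob :: "nat \<Rightarrow> real \<Rightarrow> real" where
  "absorption_prob n t = trans_prob L0 L1 n t (singletons_upto n) {{..n}}"

definition expected_lyapunov :: "nat \<Rightarrow> real \<Rightarrow> real" where
  "expected_lyapunov n t = (\<Sum>C\<in>partitions_upto n. trans_prob L0 L1 n t (singletons_upto n) C * lyapunov C)"

lemma absorption_prob_mono:
  assumes "0 \<le> a" "a \<le> b"
  shows "absorption_prob n a \<le> absorption_prob n b"
proof (rule DERIV_nonneg_imp_nondecreasing[OF assms(2)])
  fix t assume t: "a \<le> t" "t \<le> b"
  have "0 \<le> gen L0 L1 n C {{..n}}" for C
    by (cases "C = {{..n}}") (simp add: gen_eq_0_if_nzb_empty nzb_single_block, simp add: gen_def rate_nonneg)
  then have "0 \<le> (\<Sum>C\<in>partitions_upto n. trans_prob L0 L1 n t (singletons_upto n) C * gen L0 L1 n C {{..n}})"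
    using t assms by (intro sum_nonneg mult_nonneg_nonneg trans_prob_nonneg) auto
  then show "\<exists>y. (absorption_prob n has_real_derivative y) (at t) \<and> 0 \<le> y"
    unfolding absorption_prob_def[abs_def]
    using trans_prob_has_derivative[OF singletons_upto_in_partitions_upto single_block_in_partitions_upto]
    by blast
qed

lemma expected_lyapunov_has_derivative:
  "(expected_lyapunov n has_real_derivative
     (\<Sum>C\<in>partitions_upto n. trans_prob L0 L1 n t (singletons_upto n) C
        * (\<Sum>D\<in>partitions_upto n. gen L0 L1 n C D * lyapunov D))) (at t)"
proof -
  have "(expected_lyapunov n has_real_derivative (\<Sum>D\<in>partitions_upto n.
      (\<Sum>C\<in>partitions_upto n. trans_prob L0 L1 n t (singletons_upto n) C * gen L0 L1 n C D) * lyapunov D)) (at t)"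
    unfolding expected_lyapunov_def[abs_def]
    by (intro DERIV_sum DERIV_cmult_right trans_prob_has_derivative singletons_upto_in_partitions_upto)
  then show ?thesis
    by (simp only: sum_distrib_left sum_distrib_right mult.assoc) (subst sum.swap)
qed

lemma expected_drift_le:
  assumes "0 \<le> t"
  shows "(\<Sum>C\<in>partitions_upto n. trans_prob L0 L1 n t (singletons_upto n) C
      * (\<Sum>D\<in>partitions_upto n. gen L0 L1 n C D * lyapunov D)) \<le> - (1 - absorption_prob n t)"
proof -
  let ?tp = "trans_prob L0 L1 n t (singletons_upto n)"
  have "(\<Sum>C\<in>partitions_upto n. ?tp C * (\<Sum>D\<in>partitions_upto n. gen L0 L1 n C D * lyapunov D))
      \<le> (\<Sum>C\<in>partitions_upto n. ?tp C * (if C = {{..n}} then 0 else -1))"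
    using assms gen_drift_lyapunov_le nzb_empty_iff_single_block
    by (intro sum_mono mult_left_mono trans_prob_nonneg) (auto simp del: nzb_empty_iff_single_block)
  also have "\<dots> = (\<Sum>C\<in>partitions_upto n. if C = {{..n}} then ?tp C else 0)
      - (\<Sum>C\<in>partitions_upto n. ?tp C)"
    by (subst sum_subtractf[symmetric]) (intro sum.cong refl, simp)
  also have "\<dots> = - (1 - absorption_prob n t)"
    using finite_partitions_upto single_block_in_partitions_upto
    by (simp add: sum_trans_prob_row[OF singletons_upto_in_partitions_upto] absorption_prob_def)
  finally show ?thesis .
qed

lemma expected_lyapunov_decrease:
  assumes "0 \<le> a" "a < b"
  shows "(b - a) * (1 - absorption_prob n b) \<le> expected_lyapunov n a - expected_lyapunov n b"
proof -
  obtain z where z: "a < z" "z < b" and mvt: "expected_lyapunov n b - expected_lyapunov n a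
      = (b - a) * (\<Sum>C\<in>partitions_upto n. trans_prob L0 L1 n z (singletons_upto n) C
          * (\<Sum>D\<in>partitions_upto n. gen L0 L1 n C D * lyapunov D))"
    using MVT2[OF assms(2) expected_lyapunov_has_derivative] by blast
  have "- (1 - absorption_prob n z) \<le> - (1 - absorption_prob n b)"
    using absorption_prob_mono[of z b n] z assms by simp
  then have "expected_lyapunov n b - expected_lyapunov n a \<le> (b - a) * - (1 - absorption_prob n b)"
    unfolding mvt using expected_drift_le[of z n] z assms
    by (intro mult_left_mono) auto
  then show ?thesis by (simp add: algebra_simps)
qed

lemma expected_lyapunov_nonneg: "0 \<le> t \<Longrightarrow> 0 \<le> expected_lyapunov n t"
  unfolding expected_lyapunov_def lyapunov_def
  by (intro sum_nonneg mult_nonneg_nonneg trans_prob_nonneg phi_partial_sum_nonneg)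

lemma expected_lyapunov_at_0: "expected_lyapunov n 0 = phi_partial_sum n"
  using singletons_upto_in_partitions_upto finite_partitions_upto
  by (simp add: expected_lyapunov_def trans_prob_at_0 lyapunov_def card_nzb_singletons_upto
      if_distrib[of "\<lambda>x. x * _"] sum.delta cong: if_cong)

lemma riemann_sum_unabsorbed_le:
  assumes "0 < h"
  shows "(\<Sum>j<J. h * (1 - absorption_prob n (real (Suc j) * h))) \<le> phi_partial_sum n"
proof -
  have "(\<Sum>j<J. h * (1 - absorption_prob n (real (Suc j) * h)))
      \<le> expected_lyapunov n 0 - expected_lyapunov n (real J * h)"
  proof (induction J)
    case (Suc J)
    have "h * (1 - absorption_prob n (real (Suc J) * h))
        \<le> expected_lyapunov n (real J * h) - expected_lyapunov n (real (Suc J) * h)"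
      using expected_lyapunov_decrease[of "real J * h" "real (Suc J) * h" n] assms
      by (simp add: algebra_simps)
    then show ?case using Suc by simp
  qed simp
  also have "\<dots> \<le> phi_partial_sum n"
    using expected_lyapunov_nonneg[of "real J * h" n] assms by (simp add: expected_lyapunov_at_0)
  finally show ?thesis .
qed

definition unabsorbed :: "nat \<Rightarrow> real \<Rightarrow> 'w set" where
  "unabsorbed n t = {\<omega>\<in>space M. restr n (X t \<omega>) \<noteq> {{..n}}}"

definition unfixed :: "real \<Rightarrow> 'w set" where
  "unfixed t = {\<omega>\<in>space M. X t \<omega> \<noteq> {UNIV}}"

lemma unabsorbed_eq_Diff: "unabsorbed n t = space M - {\<omega>\<in>space M. restr n (X t \<omega>) = {{..n}}}"
  unfolding unabsorbed_def by auto

lemma unabsorbed_event: "0 \<le> t \<Longrightarrow> unabsorbed n t \<in> events"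
  unfolding unabsorbed_eq_Diff by (intro sets.Diff sets.top restr_X_event)

lemma absorption_prob_le_1: "0 \<le> t \<Longrightarrow> absorption_prob n t \<le> 1"
  unfolding absorption_prob_def prob_restr_X_eq[symmetric] by (rule prob_le_1)

lemma emeasure_unabsorbed:
  assumes t: "0 \<le> t"
  shows "emeasure M (unabsorbed n t) = ennreal (1 - absorption_prob n t)"
proof -
  have "prob (unabsorbed n t) = 1 - prob {\<omega>\<in>space M. restr n (X t \<omega>) = {{..n}}}"
    unfolding unabsorbed_eq_Diff by (rule prob_compl[OF restr_X_event[OF t]])
  then show ?thesis
    unfolding emeasure_eq_measure absorption_prob_def prob_restr_X_eq[OF t] by simp
qed

lemma incseq_unabsorbed: "incseq (\<lambda>n. unabsorbed n t)"
  unfolding unabsorbed_def by (rule incseq_SucI) (use restr_Suc_eq_single_block in auto)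

lemma unfixed_eq_Union_unabsorbed:
  assumes "0 \<le> t"
  shows "unfixed t = (\<Union>n. unabsorbed n t)"
proof (rule set_eqI)
  fix \<omega>
  show "\<omega> \<in> unfixed t \<longleftrightarrow> \<omega> \<in> (\<Union>n. unabsorbed n t)"
  proof (cases "\<omega> \<in> space M")
    case True
    then show ?thesis
      using single_block_iff_restr[OF is_partition_X[OF assms True]]
      unfolding unfixed_def unabsorbed_def by simp
  qed (simp add: unfixed_def unabsorbed_def)
qed

lemma unfixed_event: "0 \<le> t \<Longrightarrow> unfixed t \<in> events"
  unfolding unfixed_eq_Union_unabsorbed by (auto intro: unabsorbed_event)

lemma suminf_emeasure_unabsorbed_le:
  assumes "0 < h"
  shows "(\<Sum>j. ennreal h * emeasure M (unabsorbed n (real (Suc j) * h))) \<le> ennreal (phi_partial_sum n)"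
proof -
  let ?T = "\<lambda>j. real (Suc j) * h"
  have T: "0 \<le> ?T j" for j using assms by simp
  have "(\<Sum>j. ennreal h * emeasure M (unabsorbed n (?T j)))
      = (\<Sum>j. ennreal (h * (1 - absorption_prob n (?T j))))"
    using assms absorption_prob_le_1[OF T]
    by (intro suminf_cong) (simp add: emeasure_unabsorbed[OF T] ennreal_mult del: of_nat_Suc)
  also have "\<dots> = (SUP J. ennreal (\<Sum>j<J. h * (1 - absorption_prob n (?T j))))"
    using assms absorption_prob_le_1[OF T] by (simp add: suminf_eq_SUP sum_ennreal)
  also have "\<dots> \<le> ennreal (phi_partial_sum n)"
    using riemann_sum_unabsorbed_le[OF assms] by (intro SUP_least ennreal_leI)
  finally show ?thesis .
qed

lemma suminf_emeasure_unfixed_le: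
  assumes "0 < h"
  shows "(\<Sum>j. ennreal h * emeasure M (unfixed (real (Suc j) * h)))
    \<le> (\<Sum>n. 1 / ennreal (phi L0 L1 (Suc n)))"
proof -
  let ?T = "\<lambda>j. real (Suc j) * h"
  have T: "0 \<le> ?T j" for j using assms by simp
  have "emeasure M (unfixed (?T j)) = (SUP n. emeasure M (unabsorbed n (?T j)))" for j
    unfolding unfixed_eq_Union_unabsorbed[OF T]
    by (rule SUP_emeasure_incseq[symmetric]) (use T unabsorbed_event incseq_unabsorbed in blast)+
  then have "(\<Sum>j. ennreal h * emeasure M (unfixed (?T j)))
      = (\<Sum>j. SUP n. ennreal h * emeasure M (unabsorbed n (?T j)))"
    by (intro suminf_cong) (simp add: SUP_mult_left_ennreal)
  also have "\<dots> = (SUP n. \<Sum>j. ennreal h * emeasure M (unabsorbed n (?T j)))"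
    using incseq_unabsorbed unabsorbed_event[OF T]
    by (intro ennreal_suminf_SUP_eq) (auto simp: incseq_def intro!: mult_left_mono emeasure_mono)
  also have "\<dots> \<le> (\<Sum>n. 1 / ennreal (phi L0 L1 (Suc n)))"
    using suminf_emeasure_unabsorbed_le[OF assms] phi_partial_sum_le_suminf
    by (intro SUP_least) (blast intro: order_trans)
  finally show ?thesis .
qed

lemma fixation_time_dominated:
  assumes "0 < h"
  obtains G where "G \<in> borel_measurable M" "\<And>\<omega>. \<omega> \<in> space M \<Longrightarrow> fixation_time X \<omega> \<le> G \<omega>"
    "(\<integral>\<^sup>+\<omega>. G \<omega> \<partial>M) \<le> ennreal h + (\<Sum>n. 1 / ennreal (phi L0 L1 (Suc n)))"
proof
  let ?A = "\<lambda>j. unfixed (real (Suc j) * h)"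
  have A: "?A j \<in> events" for j using assms by (intro unfixed_event) simp
  define G where "G \<omega> = ennreal h + (\<Sum>j. ennreal h * indicator (?A j) \<omega>)" for \<omega>
  show "G \<in> borel_measurable M"
    unfolding G_def using A by measurable
  show "fixation_time X \<omega> \<le> G \<omega>" if "\<omega> \<in> space M" for \<omega>
    using fixation_time_le_grid_sum[OF assms, of X \<omega>] that
    by (simp add: G_def unfixed_def indicator_def)
  have "(\<integral>\<^sup>+\<omega>. G \<omega> \<partial>M) = ennreal h + (\<integral>\<^sup>+\<omega>. (\<Sum>j. ennreal h * indicator (?A j) \<omega>) \<partial>M)"
    unfolding G_def using A by (subst nn_integral_add) (auto simp: emeasure_space_1)
  also have "\<dots> = ennreal h + (\<Sum>j. ennreal h * emeasure M (?A j))"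
    using A by (subst nn_integral_suminf) (auto intro!: suminf_cong simp: nn_integral_cmult_indicator)
  also have "\<dots> \<le> ennreal h + (\<Sum>n. 1 / ennreal (phi L0 L1 (Suc n)))"
    using suminf_emeasure_unfixed_le[OF assms] by (rule add_left_mono)
  finally show "(\<integral>\<^sup>+\<omega>. G \<omega> \<partial>M) \<le> ennreal h + (\<Sum>n. 1 / ennreal (phi L0 L1 (Suc n)))" .
qed

lemma nn_integral_fixation_time_le:
  "(\<integral>\<^sup>+\<omega>. fixation_time X \<omega> \<partial>M) \<le> (\<Sum>n. 1 / ennreal (phi L0 L1 (Suc n)))"
proof (rule ennreal_le_epsilon)
  fix e :: real assume "0 < e"
  then obtain G where "\<And>\<omega>. \<omega> \<in> space M \<Longrightarrow> fixation_time X \<omega> \<le> G \<omega>"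
    and "(\<integral>\<^sup>+\<omega>. G \<omega> \<partial>M) \<le> ennreal e + (\<Sum>n. 1 / ennreal (phi L0 L1 (Suc n)))"
    using fixation_time_dominated by metis
  then show "(\<integral>\<^sup>+\<omega>. fixation_time X \<omega> \<partial>M) \<le> (\<Sum>n. 1 / ennreal (phi L0 L1 (Suc n))) + ennreal e"
    by (metis (no_types, lifting) add.commute nn_integral_mono order_trans)
qed

lemma AE_fixation_time_finite:
  assumes "(\<Sum>n. 1 / ennreal (phi L0 L1 (Suc n))) < \<infinity>"
  shows "AE \<omega> in M. fixation_time X \<omega> < \<infinity>"
proof -
  obtain G where G: "G \<in> borel_measurable M" "\<And>\<omega>. \<omega> \<in> space M \<Longrightarrow> fixation_time X \<omega> \<le> G \<omega>"
    "(\<integral>\<^sup>+\<omega>. G \<omega> \<partial>M) \<le> ennreal 1 + (\<Sum>n. 1 / ennreal (phi L0 L1 (Suc n)))"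
    using fixation_time_dominated[of 1] by auto
  then have "(\<integral>\<^sup>+\<omega>. G \<omega> \<partial>M) \<noteq> \<infinity>"
    using assms by (metis ennreal_add_less_top ennreal_less_top infinity_ennreal_def le_less_trans less_le)
  then have "AE \<omega> in M. G \<omega> \<noteq> \<infinity>" by (rule nn_integral_PInf_AE[OF G(1)])
  moreover have "AE \<omega> in M. \<omega> \<in> space M" by (rule AE_space)
  ultimately show ?thesis
    by eventually_elim (metis G(2) infinity_ennreal_def le_less_trans less_top)
qed

end

theorem lemma14:
  fixes \<Lambda>0 \<Lambda>1 :: "real measure" and M :: "'w measure" and X :: "real \<Rightarrow> 'w \<Rightarrow> nat set set"
  assumes "finite_measure \<Lambda>0" and "finite_measure \<Lambda>1"
    and "sets \<Lambda>0 = sets borel" and "sets \<Lambda>1 = sets borel"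
    and "emeasure \<Lambda>0 (- {0..1}) = 0" and "emeasure \<Lambda>1 (- {0..1}) = 0"
    and "emeasure \<Lambda>0 {1} + emeasure \<Lambda>1 {1} = 0"
    and "prob_space M"
    and "is_coalescent \<Lambda>0 \<Lambda>1 M X"
  shows "(\<integral>\<^sup>+\<omega>. fixation_time X \<omega> \<partial>M) \<le> (\<Sum>n. 1 / ennreal (phi \<Lambda>0 \<Lambda>1 (Suc n)))
    \<and> ((\<Sum>n. 1 / ennreal (phi \<Lambda>0 \<Lambda>1 (Suc n))) < \<infinity> \<longrightarrow> (AE \<omega> in M. fixation_time X \<omega> < \<infinity>))"
proof (cases "\<exists>m. phi \<Lambda>0 \<Lambda>1 (Suc m) = 0")
  \<comment> \<open>then one summand is 1 / ennreal 0 = \<top>\<close>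
  case True
  then obtain m where "phi \<Lambda>0 \<Lambda>1 (Suc m) = 0" by blast
  moreover have "(\<Sum>n\<in>{m}. 1 / ennreal (phi \<Lambda>0 \<Lambda>1 (Suc n))) \<le> (\<Sum>n. 1 / ennreal (phi \<Lambda>0 \<Lambda>1 (Suc n)))"
    by (rule sum_le_suminf) auto
  ultimately show ?thesis by (simp add: top_unique)
next
  case False
  have L0: "unit_interval_measure \<Lambda>0" and L1: "unit_interval_measure \<Lambda>1"
    using assms by (auto intro: unit_interval_measure.intro)
  have "0 < phi \<Lambda>0 \<Lambda>1 m" if m: "1 \<le> m" for m
  proof -
    obtain k where "m = Suc k" using m by (cases m) auto
    then show ?thesis using False phi_nonneg[OF L1, of \<Lambda>0 m] by (simp add: less_le)
  qed
  with L0 L1 assms(8,9) interpret coalescent_process \<Lambda>0 \<Lambda>1 M X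
    by (intro coalescent_process.intro coalescent_rates.intro coalescent_process_axioms.intro)
  show ?thesis using nn_integral_fixation_time_le AE_fixation_time_finite by blast
qed

end
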